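(* Let $M,N,p\ge1$ and $(a,b)\in\mathbb Z_M^p\times\mathbb Z_N^p$ be such that the multisets $\{(a_y,b_y)\}_{y=1}^p$ and $\{(a_y,b_{y+1})\}_{y=1}^p$ are different. For $r\ge1$ let $$K_p^r(a,b)=\frac{1}{M^r}\#\{i\in\mathbb Z_M^r:\ (E_x)\text{ holds for all }x=1,\dots,r\}.$$ Then $K_p^r(a,b)\to0$ as $r\to\infty$.
   Context: Cyclic conventions: $i_{r+1}=i_1$, $b_{p+1}=b_1$. For $x\in\{1,\dots,r\}$, condition $(E_x)$ says that the multisets $\{(i_x+a_y,b_y),(i_{x+1}+a_y,b_{y+1}):y=1,\dots,p\}$ and $\{(i_x+a_y,b_{y+1}),(i_{x+1}+a_y,b_y):y=1,\dots,p\}$ of elements of $\mathbb Z_M\times\mathbb Z_N$ (counted with multiplicity) coincide. *)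

theory Defs
  imports "HOL-Analysis.Analysis" "HOL-Library.Multiset" "HOL-Library.FuncSet"
begin

text \<open>Elements of Z_M are represented by naturals in {0..<M}; sequences indexed
  by {1..p} are represented 0-based as functions on {0..<p}, with cyclic successor
  y \<mapsto> (y+1) mod p.\<close>

definition multiset_ab :: "nat \<Rightarrow> (nat \<Rightarrow> nat) \<Rightarrow> (nat \<Rightarrow> nat) \<Rightarrow> (nat \<times> nat) multiset" where
  "multiset_ab p a b = image_mset (\<lambda>y. (a y, b y)) (mset [0..<p])"

definition multiset_ab_shift :: "nat \<Rightarrow> (nat \<Rightarrow> nat) \<Rightarrow> (nat \<Rightarrow> nat) \<Rightarrow> (nat \<times> nat) multiset" where
  "multiset_ab_shift p a b = image_mset (\<lambda>y. (a y, b ((y + 1) mod p))) (mset [0..<p])"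

definition cond_E :: "nat \<Rightarrow> nat \<Rightarrow> nat \<Rightarrow> nat \<Rightarrow> (nat \<Rightarrow> nat) \<Rightarrow> (nat \<Rightarrow> nat) \<Rightarrow> (nat \<Rightarrow> nat) \<Rightarrow> nat \<Rightarrow> bool" where
  "cond_E M N p r a b i x \<longleftrightarrow>
     (let ix = i x; ix' = i ((x + 1) mod r) in
       image_mset (\<lambda>y. ((ix + a y) mod M, b y)) (mset [0..<p])
       + image_mset (\<lambda>y. ((ix' + a y) mod M, b ((y + 1) mod p))) (mset [0..<p])
     = image_mset (\<lambda>y. ((ix + a y) mod M, b ((y + 1) mod p))) (mset [0..<p])
       + image_mset (\<lambda>y. ((ix' + a y) mod M, b y)) (mset [0..<p]))"

definition K :: "nat \<Rightarrow> nat \<Rightarrow> nat \<Rightarrow> (nat \<Rightarrow> nat) \<Rightarrow> (nat \<Rightarrow> nat) \<Rightarrow> nat \<Rightarrow> real" where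
  "K M N p a b r =
     real (card {i \<in> {0..<r} \<rightarrow>\<^sub>E {0..<M}. \<forall>x<r. cond_E M N p r a b i x}) / real M ^ r"

end

theory Submission
  imports Defs
begin

text \<open>Write \<open>A u\<close> and \<open>C u\<close> for the multisets \<open>{(u + a\<^sub>y, b\<^sub>y)}\<close> and \<open>{(u + a\<^sub>y, b\<^sub>y\<^sub>+\<^sub>1)}\<close>.
  Condition \<open>(E\<^sub>x)\<close> reads \<open>A i\<^sub>x + C i\<^sub>x\<^sub>+\<^sub>1 = C i\<^sub>x + A i\<^sub>x\<^sub>+\<^sub>1\<close>, i.e. \<open>A - C\<close> takes the same
  value at \<open>i\<^sub>x\<close> and \<open>i\<^sub>x\<^sub>+\<^sub>1\<close>; this is an equivalence relation on \<open>\<int>\<^sub>M\<close>, so an admissible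
  \<open>i\<close> lies in a single class. Averaging over all translates gives \<open>\<Sum>\<^sub>u A u = \<Sum>\<^sub>u C u\<close>, so if
  the class of \<open>0\<close> were all of \<open>\<int>\<^sub>M\<close> then \<open>M \<cdot> A 0 = M \<cdot> C 0\<close>, contradicting the hypothesis.
  Hence every class has at most \<open>M - 1\<close> elements and \<open>K\<^sub>p\<^sup>r \<le> M ((M - 1) / M)\<^sup>r\<close>.\<close>

lemma cross_sum_eq_sym:
  fixes f g :: "'b \<Rightarrow> 'a::cancel_comm_monoid_add"
  shows "f u + g v = g u + f v \<Longrightarrow> f v + g u = g v + f u"
  by (simp add: add.commute)

lemma cross_sum_eq_trans:
  fixes f g :: "'b \<Rightarrow> 'a::cancel_comm_monoid_add"
  assumes uv: "f u + g v = g u + f v" and vw: "f v + g w = g v + f w"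
  shows "f u + g w = g u + f w"
proof -
  have "(f u + g w) + (f v + g v) = (f u + g v) + (f v + g w)"
    by (simp add: ac_simps)
  also have "\<dots> = (g u + f w) + (f v + g v)"
    using uv vw by (simp add: ac_simps)
  finally show ?thesis
    by simp
qed

lemma bij_betw_rotate_mod:
  assumes "0 < (M::nat)"
  shows "bij_betw (\<lambda>u. (u + c) mod M) {0..<M} {0..<M}"
proof -
  have into: "(\<lambda>u. (u + c) mod M) ` {0..<M} \<subseteq> {0..<M}"
    using assms by auto
  have "inj_on (\<lambda>u. (u + c) mod M) {0..<M}"
  proof (rule inj_onI)
    fix u v
    assume "u \<in> {0..<M}" "v \<in> {0..<M}" "(u + c) mod M = (v + c) mod M"
    then obtain q1 q2 where "u + M * q1 = v + M * q2" and "u < M" and "v < M"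
      by (auto simp: nat_mod_eq_iff)
    then show "u = v"
      by (metis mod_less mod_mult_self2)
  qed
  with into show ?thesis
    by (simp add: bij_betw_def endo_inj_surj)
qed

lemma image_mset_rotate_mod:
  "0 < (M::nat) \<Longrightarrow> image_mset (\<lambda>u. (u + c) mod M) (mset_set {0..<M}) = mset_set {0..<M}"
  using bij_betw_rotate_mod by (metis bij_betw_def image_mset_mset_set)

definition translate_mset ::
    "nat \<Rightarrow> nat \<Rightarrow> (nat \<Rightarrow> nat) \<Rightarrow> (nat \<Rightarrow> nat) \<Rightarrow> nat \<Rightarrow> (nat \<times> nat) multiset" where
  "translate_mset M p a f u = image_mset (\<lambda>y. ((u + a y) mod M, f y)) (mset [0..<p])"

lemma sum_translate_mset:
  assumes "0 < M"
  shows "(\<Sum>u\<in>{0..<M}. translate_mset M p a f u)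
       = (\<Sum>y\<in>{0..<p}. image_mset (\<lambda>s. (s, f y)) (mset_set {0..<M}))"
proof -
  have singletons: "image_mset h (mset_set A) = (\<Sum>x\<in>A. {#h x#})" for h :: "nat \<Rightarrow> nat \<times> nat" and A :: "nat set"
    by (simp add: sum_unfold_sum_mset)
  have "(\<Sum>u\<in>{0..<M}. translate_mset M p a f u)
      = (\<Sum>y\<in>{0..<p}. \<Sum>u\<in>{0..<M}. {#((u + a y) mod M, f y)#})"
    by (simp add: translate_mset_def singletons sum.swap[where A = "{0..<M}"])
  also have "\<dots> = (\<Sum>y\<in>{0..<p}. image_mset (\<lambda>u. ((u + a y) mod M, f y)) (mset_set {0..<M}))"
    by (simp only: singletons)
  also have "\<dots> = (\<Sum>y\<in>{0..<p}.
      image_mset (\<lambda>s. (s, f y)) (image_mset (\<lambda>u. (u + a y) mod M) (mset_set {0..<M})))"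
    by (simp add: multiset.map_comp o_def)
  also have "\<dots> = (\<Sum>y\<in>{0..<p}. image_mset (\<lambda>s. (s, f y)) (mset_set {0..<M}))"
    using image_mset_rotate_mod[OF assms] by simp
  finally show ?thesis .
qed

lemma sum_translate_mset_shift:
  assumes "0 < M" and "0 < p"
  shows "(\<Sum>u\<in>{0..<M}. translate_mset M p a (\<lambda>y. b ((y + 1) mod p)) u)
       = (\<Sum>u\<in>{0..<M}. translate_mset M p a b u)"
proof -
  define G where "G t = image_mset (\<lambda>s. (s, t)) (mset_set {0..<M})" for t :: nat
  have "(\<Sum>y\<in>{0..<p}. G (b ((y + 1) mod p))) = (\<Sum>y\<in>{0..<p}. G (b y))"
    using sum.reindex_bij_betw[OF bij_betw_rotate_mod[OF assms(2), of 1], of "\<lambda>y. G (b y)"]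
    by simp
  then show ?thesis
    by (simp add: sum_translate_mset[OF assms(1)] G_def)
qed

definition E_related :: "nat \<Rightarrow> nat \<Rightarrow> (nat \<Rightarrow> nat) \<Rightarrow> (nat \<Rightarrow> nat) \<Rightarrow> nat \<Rightarrow> nat \<Rightarrow> bool" where
  "E_related M p a b u v \<longleftrightarrow>
     translate_mset M p a b u + translate_mset M p a (\<lambda>y. b ((y + 1) mod p)) v
   = translate_mset M p a (\<lambda>y. b ((y + 1) mod p)) u + translate_mset M p a b v"

lemma cond_E_iff_E_related:
  "cond_E M N p r a b i x \<longleftrightarrow> E_related M p a b (i x) (i ((x + 1) mod r))"
  by (simp add: cond_E_def E_related_def translate_mset_def Let_def)

lemma reflp_E_related: "reflp (E_related M p a b)"
  by (simp add: reflp_def E_related_def add.commute)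

lemma symp_E_related: "symp (E_related M p a b)"
  unfolding symp_def E_related_def by (blast intro: cross_sum_eq_sym)

lemma transp_E_related: "transp (E_related M p a b)"
  unfolding transp_def E_related_def by (blast intro: cross_sum_eq_trans)

lemma cross_sum_eq_on_all_imp_eq:
  fixes f g :: "'b \<Rightarrow> 'a multiset"
  assumes "\<forall>v\<in>S. f u + g v = g u + f v" and "sum f S = sum g S"
    and "finite S" and "S \<noteq> {}"
  shows "f u = g u"
proof (rule multiset_eqI)
  fix z
  have "(\<Sum>v\<in>S. count (f u) z + count (g v) z) = (\<Sum>v\<in>S. count (g u) z + count (f v) z)"
    using assms(1) by (intro sum.cong) (auto simp flip: count_union)
  then have "card S * count (f u) z = card S * count (g u) z"
    using assms(2) by (simp add: sum.distrib flip: count_sum)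
  then show "count (f u) z = count (g u) z"
    using assms(3,4) by simp
qed

lemma exists_not_E_related:
  assumes "0 < M" and "0 < p" and "\<forall>y<p. a y < M"
    and "multiset_ab p a b \<noteq> multiset_ab_shift p a b"
  shows "\<exists>v<M. \<not> E_related M p a b 0 v"
proof (rule ccontr)
  assume "\<not> ?thesis"
  then have "\<forall>v\<in>{0..<M}. translate_mset M p a b 0 + translate_mset M p a (\<lambda>y. b ((y + 1) mod p)) v
      = translate_mset M p a (\<lambda>y. b ((y + 1) mod p)) 0 + translate_mset M p a b v"
    by (auto simp: E_related_def)
  then have "translate_mset M p a b 0 = translate_mset M p a (\<lambda>y. b ((y + 1) mod p)) 0"
    by (rule cross_sum_eq_on_all_imp_eq)
      (use assms(1) sum_translate_mset_shift[OF assms(1,2), of a b] in auto)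
  moreover have "translate_mset M p a b 0 = multiset_ab p a b"
    and "translate_mset M p a (\<lambda>y. b ((y + 1) mod p)) 0 = multiset_ab_shift p a b"
    unfolding translate_mset_def multiset_ab_def multiset_ab_shift_def
    using assms(3) by (auto intro: image_mset_cong)
  ultimately show False
    using assms(4) by simp
qed

lemma card_equivalence_class_less:
  assumes "finite S" and "symp R" and "transp R"
    and "u0 \<in> S" and "v0 \<in> S" and "\<not> R u0 v0"
  shows "card {v \<in> S. R u v} < card S"
proof -
  have "\<not> (R u u0 \<and> R u v0)"
  proof
    assume "R u u0 \<and> R u v0"
    then have "R u0 u" and "R u v0"
      using sympD[OF assms(2)] by auto
    then show False
      using transpD[OF assms(3)] assms(6) by blast
  qed
  then have "{v \<in> S. R u v} \<subset> S"
    using assms(4,5) by blast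
  then show ?thesis
    using assms(1) by (rule psubset_card_mono[rotated])
qed

text \<open>A chain of a preorder stays in the upper set of its first element.\<close>
lemma card_chains_le:
  assumes "finite S" and "0 < r" and "reflp R" and "transp R"
    and "\<forall>u\<in>S. card {v \<in> S. R u v} \<le> k"
  shows "card {i \<in> {0..<r} \<rightarrow>\<^sub>E S. \<forall>x. Suc x < r \<longrightarrow> R (i x) (i (Suc x))} \<le> card S * k ^ r"
proof -
  let ?up = "\<lambda>u. {v \<in> S. R u v}"
  have chains_sub: "{i \<in> {0..<r} \<rightarrow>\<^sub>E S. \<forall>x. Suc x < r \<longrightarrow> R (i x) (i (Suc x))}
      \<subseteq> (\<Union>u\<in>S. {0..<r} \<rightarrow>\<^sub>E ?up u)"
  proof
    fix i
    assume i: "i \<in> {i \<in> {0..<r} \<rightarrow>\<^sub>E S. \<forall>x. Suc x < r \<longrightarrow> R (i x) (i (Suc x))}"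
    have "R (i 0) (i x)" if "x < r" for x
      using that
    proof (induction x)
      case 0
      show ?case
        using assms(3) by (rule reflpD)
    next
      case (Suc x)
      then have "R (i 0) (i x)" and "R (i x) (i (Suc x))"
        using i by auto
      then show ?case
        by (rule transpD[OF assms(4)])
    qed
    then have "i \<in> {0..<r} \<rightarrow>\<^sub>E ?up (i 0)"
      using i by (auto simp: PiE_def Pi_def)
    moreover have "i 0 \<in> S"
      using i assms(2) by auto
    ultimately show "i \<in> (\<Union>u\<in>S. {0..<r} \<rightarrow>\<^sub>E ?up u)"
      by (rule UN_I[rotated])
  qed
  have "card {i \<in> {0..<r} \<rightarrow>\<^sub>E S. \<forall>x. Suc x < r \<longrightarrow> R (i x) (i (Suc x))}
      \<le> card (\<Union>u\<in>S. {0..<r} \<rightarrow>\<^sub>E ?up u)"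
    using assms(1) by (intro card_mono[OF _ chains_sub]) (auto intro!: finite_PiE)
  also have "\<dots> \<le> (\<Sum>u\<in>S. card ({0..<r} \<rightarrow>\<^sub>E ?up u))"
    using assms(1) by (rule card_UN_le)
  also have "\<dots> \<le> (\<Sum>u\<in>S. k ^ r)"
    using assms(5) by (intro sum_mono) (simp add: card_PiE power_mono del: Collect_mem_eq)
  finally show ?thesis
    by simp
qed

lemma card_admissible_le:
  assumes "0 < M" and "0 < p" and "\<forall>y<p. a y < M"
    and "multiset_ab p a b \<noteq> multiset_ab_shift p a b" and "0 < r"
  shows "card {i \<in> {0..<r} \<rightarrow>\<^sub>E {0..<M}. \<forall>x<r. cond_E M N p r a b i x} \<le> M * (M - 1) ^ r"
proof -
  obtain v0 where v0: "v0 < M" "\<not> E_related M p a b 0 v0"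
    using exists_not_E_related[OF assms(1-4)] by blast
  have classes: "\<forall>u\<in>{0..<M}. card {v \<in> {0..<M}. E_related M p a b u v} \<le> M - 1"
  proof
    fix u
    have "card {v \<in> {0..<M}. E_related M p a b u v} < card {0..<M}"
      by (rule card_equivalence_class_less[OF _ symp_E_related transp_E_related])
        (use assms(1) v0 in auto)
    then show "card {v \<in> {0..<M}. E_related M p a b u v} \<le> M - 1"
      by simp
  qed
  have "{i \<in> {0..<r} \<rightarrow>\<^sub>E {0..<M}. \<forall>x<r. cond_E M N p r a b i x}
      \<subseteq> {i \<in> {0..<r} \<rightarrow>\<^sub>E {0..<M}. \<forall>x. Suc x < r \<longrightarrow> E_related M p a b (i x) (i (Suc x))}"
    by (auto simp: cond_E_iff_E_related) (metis Suc_lessD mod_less)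
  then have "card {i \<in> {0..<r} \<rightarrow>\<^sub>E {0..<M}. \<forall>x<r. cond_E M N p r a b i x}
      \<le> card {i \<in> {0..<r} \<rightarrow>\<^sub>E {0..<M}. \<forall>x. Suc x < r \<longrightarrow> E_related M p a b (i x) (i (Suc x))}"
    by (intro card_mono) (auto intro!: finite_PiE)
  also have "\<dots> \<le> M * (M - 1) ^ r"
    using card_chains_le[OF _ assms(5) reflp_E_related transp_E_related classes] by simp
  finally show ?thesis .
qed

theorem proposition5p3:
  fixes M N p :: nat and a b :: "nat \<Rightarrow> nat"
  assumes "M \<ge> 1" and "N \<ge> 1" and "p \<ge> 1"
    and "\<forall>y<p. a y < M" and "\<forall>y<p. b y < N"
    and "multiset_ab p a b \<noteq> multiset_ab_shift p a b"
  shows "(\<lambda>r. K M N p a b r) \<longlonglongrightarrow> 0"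
proof (rule Lim_null_comparison)
  have M_pos: "real M > 0"
    using assms(1) by simp
  show "\<forall>\<^sub>F r in sequentially. norm (K M N p a b r) \<le> real M * ((real M - 1) / real M) ^ r"
  proof (rule eventually_sequentiallyI[of 1])
    fix r :: nat
    assume "r \<ge> 1"
    then have "card {i \<in> {0..<r} \<rightarrow>\<^sub>E {0..<M}. \<forall>x<r. cond_E M N p r a b i x} \<le> M * (M - 1) ^ r"
      using card_admissible_le[of M p a b r N] assms by simp
    then have "real (card {i \<in> {0..<r} \<rightarrow>\<^sub>E {0..<M}. \<forall>x<r. cond_E M N p r a b i x})
        \<le> real (M * (M - 1) ^ r)"
      by (simp only: of_nat_le_iff)
    then have "real (card {i \<in> {0..<r} \<rightarrow>\<^sub>E {0..<M}. \<forall>x<r. cond_E M N p r a b i x})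
        \<le> real M * (real M - 1) ^ r"
      using assms(1) by simp
    then show "norm (K M N p a b r) \<le> real M * ((real M - 1) / real M) ^ r"
      using M_pos by (simp add: K_def divide_right_mono power_divide)
  qed
  have "(\<lambda>r. ((real M - 1) / real M) ^ r) \<longlonglongrightarrow> 0"
    using M_pos by (intro LIMSEQ_power_zero) (simp add: divide_simps)
  then show "(\<lambda>r. real M * ((real M - 1) / real M) ^ r) \<longlonglongrightarrow> 0"
    by (rule tendsto_mult_right_zero)
qed

end
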